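(* Let $n\ge3$ be an odd integer and let $x\in\mathcal{D}_n$ have order $m$. Then the degree of $x$ in $OD(\mathcal{D}_n)$ is $$\deg(x)=\begin{cases} m-2\phi(m)+\sum_{\lambda\mid\frac{n}{m}}\phi(\lambda m), & m>2,\\ 2n-1, & m=1,\\ 1, & m=2,\end{cases}$$ where $\phi$ is Euler's totient function.
   Context: The dihedral group $\mathcal{D}_n$ ($n\ge3$) is the group $\langle a,b\mid a^n=b^2=(ab)^2=e\rangle$ of order $2n$. For a finite group $G$, $o(x)$ denotes the order of $x\in G$. The order-divisor graph $OD(G)$ is the simple undirected graph with vertex set $G$, in which two distinct vertices $x,y$ are adjacent if and only if $o(x)\neq o(y)$ and either $o(x)\mid o(y)$ or $o(y)\mid o(x)$. *)

theory Defs
  imports "HOL-Algebra.Multiplicative_Group" "HOL-Algebra.Generated_Groups" "HOL-Number_Theory.Totient"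
begin

definition OD_adj :: "('a, 'b) monoid_scheme \<Rightarrow> 'a \<Rightarrow> 'a \<Rightarrow> bool" where
  "OD_adj G x y \<longleftrightarrow> x \<noteq> y \<and> group.ord G x \<noteq> group.ord G y \<and>
     (group.ord G x dvd group.ord G y \<or> group.ord G y dvd group.ord G x)"

definition OD_degree :: "('a, 'b) monoid_scheme \<Rightarrow> 'a \<Rightarrow> nat" where
  "OD_degree G x = card {y \<in> carrier G. OD_adj G x y}"

text \<open>G is (a copy of) the dihedral group D_n = <a,b | a^n = b^2 = (ab)^2 = e> of order 2n:
  generated by a, b satisfying the relations and having order 2n (this determines G up to
  isomorphism).\<close>
definition is_dihedral :: "('a, 'b) monoid_scheme \<Rightarrow> nat \<Rightarrow> bool" where
  "is_dihedral G n \<longleftrightarrow> group G \<and> finite (carrier G) \<and> order G = 2 * n \<and>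
     (\<exists>a\<in>carrier G. \<exists>b\<in>carrier G. generate G {a, b} = carrier G \<and>
        a [^]\<^bsub>G\<^esub> n = \<one>\<^bsub>G\<^esub> \<and> b [^]\<^bsub>G\<^esub> (2::nat) = \<one>\<^bsub>G\<^esub> \<and>
        (a \<otimes>\<^bsub>G\<^esub> b) [^]\<^bsub>G\<^esub> (2::nat) = \<one>\<^bsub>G\<^esub>)"

end

theory Submission
  imports Defs
begin

text \<open>Every element of \<open>D\<^sub>n\<close> is uniquely \<open>a\<^sup>k b\<^sup>e\<close> with \<open>k < n\<close>, \<open>e < 2\<close>; the rotation \<open>a\<^sup>k\<close>
  has order \<open>n / gcd n k\<close> and all reflections have order 2. Hence for every \<open>d | n\<close> there are
  exactly \<open>\<phi> d\<close> elements of order \<open>d\<close>, besides the \<open>n\<close> elements of order 2, and the degree of \<open>x\<close>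
  is a sum of \<open>\<phi> d\<close> over the divisors \<open>d \<noteq> ord x\<close> of \<open>n\<close> comparable with \<open>ord x\<close> under
  divisibility (plus \<open>n\<close> if \<open>ord x\<close> is comparable with 2). Since \<open>n\<close> is odd, only \<open>ord x = 1\<close> is
  comparable with 2, and for \<open>m = ord x | n\<close> the sum splits into the proper divisors of \<open>m\<close>
  (contributing \<open>m - \<phi> m\<close>) and the proper multiples of \<open>m\<close> dividing \<open>n\<close>.\<close>

lemma card_lessThan_eq_card_greaterThanAtMost:
  fixes n :: nat
  assumes "P 0 = P n"
  shows "card {k\<in>{..<n}. P k} = card {k\<in>{0<..n}. P k}"
proof -
  define shift where "shift k = (if k = 0 then n else k)" for k
  have "shift ` {k\<in>{..<n}. P k} = {k\<in>{0<..n}. P k}"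
  proof (intro equalityI subsetI)
    fix k assume k: "k \<in> {k\<in>{0<..n}. P k}"
    show "k \<in> shift ` {k\<in>{..<n}. P k}"
    proof (cases "k = n")
      case True
      then show ?thesis using k assms by (intro image_eqI[of _ _ 0]) (auto simp: shift_def)
    next
      case False
      then show ?thesis using k by (intro image_eqI[of _ _ k]) (auto simp: shift_def)
    qed
  qed (use assms in \<open>auto simp: shift_def\<close>)
  moreover have "inj_on shift {k\<in>{..<n}. P k}" by (auto simp: inj_on_def shift_def)
  ultimately show ?thesis by (metis card_image)
qed

lemma card_div_gcd_eq_totient:
  fixes n d :: nat
  assumes "0 < n" "d dvd n"
  shows "card {k\<in>{..<n}. n div gcd n k = d} = totient d"
proof -
  have "0 < d" using assms by (auto intro: Nat.gr0I)
  have "card {k\<in>{..<n}. n div gcd n k = d} = card {k\<in>{0<..n}. n div gcd n k = d}"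
    by (rule card_lessThan_eq_card_greaterThanAtMost) simp
  also have "{k\<in>{0<..n}. n div gcd n k = d} = {k\<in>{0<..n}. gcd k n = n div d}"
  proof (intro Collect_cong conj_cong refl)
    fix k
    have "gcd n k dvd n" "gcd n k > 0" using assms by auto
    then show "(n div gcd n k = d) = (gcd k n = n div d)"
      using assms \<open>0 < d\<close>
      by (metis dvd_mult_div_cancel gcd.commute mult.commute
          nonzero_mult_div_cancel_left not_gr0 div_mult_self1_is_m)
  qed
  also have "card \<dots> = totient (n div (n div d))"
    using assms by (intro card_gcd_eq_totient) auto
  also have "n div (n div d) = d"
    using assms \<open>0 < d\<close>
    by (metis dvd_div_mult_self dvd_triv_left div_mult_self1_is_m dvd_div_eq_0_iff not_gr0)
  finally show ?thesis .
qed

lemma card_div_gcd_sum_totient: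
  fixes n :: nat
  assumes "0 < n"
  shows "card {k\<in>{..<n}. P (n div gcd n k)} = (\<Sum>d | d dvd n \<and> P d. totient d)"
proof -
  have "{k\<in>{..<n}. P (n div gcd n k)} =
      (\<Union>d\<in>{d. d dvd n \<and> P d}. {k\<in>{..<n}. n div gcd n k = d})"
    by (auto simp: div_dvd_div[symmetric] dvd_div_eq_mult)
      (metis dvd_div_mult_self gcd_dvd1 dvd_triv_left)
  also have "card \<dots> = (\<Sum>d | d dvd n \<and> P d. card {k\<in>{..<n}. n div gcd n k = d})"
    using assms by (intro card_UN_disjoint) auto
  also have "\<dots> = (\<Sum>d | d dvd n \<and> P d. totient d)"
    by (rule sum.cong) (use assms card_div_gcd_eq_totient in auto)
  finally show ?thesis .
qed

lemma sum_totient_proper_divisors: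
  fixes m :: nat
  assumes "0 < m"
  shows "(\<Sum>d | d dvd m \<and> d \<noteq> m. totient d) + totient m = m"
proof -
  have "{d. d dvd m} = insert m {d. d dvd m \<and> d \<noteq> m}" by auto
  moreover have "finite {d. d dvd m \<and> d \<noteq> m}" using assms by auto
  ultimately show ?thesis using totient_divisor_sum[of m] by (simp add: add.commute)
qed

lemma sum_totient_multiples:
  fixes m n :: nat
  assumes "0 < n" "m dvd n"
  shows "(\<Sum>d | d dvd n \<and> m dvd d. totient d) = (\<Sum>l | l dvd n div m. totient (l * m))"
proof -
  have "m \<noteq> 0" using assms by auto
  have "{d. d dvd n \<and> m dvd d} = (\<lambda>l. l * m) ` {l. l dvd n div m}"
  proof (intro equalityI subsetI)
    fix d assume "d \<in> {d. d dvd n \<and> m dvd d}"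
    then obtain l where "d = l * m" "l * m dvd n" by (metis mem_Collect_eq dvdE mult.commute)
    then show "d \<in> (\<lambda>l. l * m) ` {l. l dvd n div m}"
      using \<open>m \<noteq> 0\<close> assms(2) by (auto simp: dvd_div_iff_mult)
  qed (use \<open>m \<noteq> 0\<close> assms(2) in \<open>auto simp: dvd_div_iff_mult\<close>)
  moreover have "inj_on (\<lambda>l. l * m) {l. l dvd n div m}" using \<open>m \<noteq> 0\<close> by (auto simp: inj_on_def)
  ultimately show ?thesis by (simp add: sum.reindex)
qed

lemma sum_totient_comparable_divisors:
  fixes m n :: nat
  assumes "0 < n" "m dvd n"
  shows "int (\<Sum>d | d dvd n \<and> d \<noteq> m \<and> (d dvd m \<or> m dvd d). totient d) =
    int m - 2 * int (totient m) + (\<Sum>l | l dvd n div m. int (totient (l * m)))"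
proof -
  have "0 < m" using assms by (auto intro: Nat.gr0I)
  define A where "A = {d. d dvd m \<and> d \<noteq> m}"
  define B where "B = {d. d dvd n \<and> m dvd d}"
  have "finite A" "finite B" using \<open>0 < m\<close> assms unfolding A_def B_def by auto
  have "{d. d dvd n \<and> d \<noteq> m \<and> (d dvd m \<or> m dvd d)} = A \<union> (B - {m})"
    unfolding A_def B_def using assms(2) dvd_trans by blast
  moreover have "A \<inter> (B - {m}) = {}" unfolding A_def B_def using dvd_antisym by blast
  ultimately have "(\<Sum>d | d dvd n \<and> d \<noteq> m \<and> (d dvd m \<or> m dvd d). totient d) =
      sum totient A + sum totient (B - {m})"
    using \<open>finite A\<close> \<open>finite B\<close> by (simp add: sum.union_disjoint)
  moreover have "sum totient B = totient m + sum totient (B - {m})"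
    using \<open>finite B\<close> assms(2) by (intro sum.remove) (auto simp: B_def)
  moreover have "sum totient A + totient m = m"
    unfolding A_def by (rule sum_totient_proper_divisors[OF \<open>0 < m\<close>])
  moreover have "sum totient B = (\<Sum>l | l dvd n div m. totient (l * m))"
    unfolding B_def by (rule sum_totient_multiples[OF assms])
  ultimately have "int (\<Sum>d | d dvd n \<and> d \<noteq> m \<and> (d dvd m \<or> m dvd d). totient d) =
      int m - 2 * int (totient m) + int (\<Sum>l | l dvd n div m. totient (l * m))"
    by linarith
  then show ?thesis by simp
qed

lemma odd_dvd_two_eq_one:
  fixes d :: nat
  assumes "odd d" "d dvd 2"
  shows "d = 1"
proof -
  have "d \<le> 2" using assms(2) by (rule dvd_imp_le) simp
  with assms(1) show ?thesis by presburger
qed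

lemma odd_divisors_comparable_with_two:
  fixes n :: nat
  assumes "odd n"
  shows "{d. d dvd n \<and> d \<noteq> 2 \<and> (d dvd 2 \<or> 2 dvd d)} = {1}"
proof (intro equalityI subsetI)
  fix d assume d: "d \<in> {d. d dvd n \<and> d \<noteq> 2 \<and> (d dvd 2 \<or> 2 dvd d)}"
  then have "odd d" using assms dvd_trans[of 2 d n] by blast
  with d show "d \<in> {1}" using odd_dvd_two_eq_one by auto
qed auto

locale dihedral_relations = group G for G (structure) +
  fixes n :: nat and a b
  assumes n_pos: "0 < n"
    and generators_closed [simp]: "a \<in> carrier G" "b \<in> carrier G"
    and a_pow_n: "a [^] n = \<one>"
    and b_square: "b [^] (2::nat) = \<one>"
    and ab_square: "(a \<otimes> b) [^] (2::nat) = \<one>"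
begin

lemma b_mult_b: "b \<otimes> b = \<one>"
  using b_square by (simp add: numeral_2_eq_2)

lemma inv_a: "inv a = a [^] (n - 1)"
proof -
  have "a [^] (n - 1) \<otimes> a = \<one>"
    using a_pow_n n_pos by (metis nat_pow_Suc Suc_diff_1)
  then show ?thesis by (simp add: inv_equality)
qed

lemma b_conj_a: "b \<otimes> a \<otimes> b = a [^] (n - 1)"
proof -
  have "a \<otimes> (b \<otimes> a \<otimes> b) = \<one>" using ab_square by (simp add: numeral_2_eq_2 m_assoc)
  then show ?thesis by (metis inv_a inv_equality inv_comm m_closed generators_closed)
qed

lemma b_conj_a_pow: "b \<otimes> a [^] k \<otimes> b = a [^] ((n - 1) * k)"
proof (induction k)
  case 0
  then show ?case by (simp add: b_mult_b)
next
  case (Suc k)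
  have "b \<otimes> a [^] Suc k \<otimes> b = (b \<otimes> a [^] k \<otimes> b) \<otimes> (b \<otimes> a \<otimes> b)"
    by (simp add: m_assoc b_mult_b flip: m_assoc[of b b])
  also have "\<dots> = a [^] ((n - 1) * Suc k)"
    using Suc by (simp add: b_conj_a nat_pow_mult add.commute)
  finally show ?case .
qed

lemma b_mult_a_pow: "b \<otimes> a [^] k = a [^] ((n - 1) * k) \<otimes> b"
proof -
  have "a [^] ((n - 1) * k) \<otimes> b = b \<otimes> a [^] k \<otimes> b \<otimes> b" by (simp add: b_conj_a_pow)
  also have "\<dots> = b \<otimes> a [^] k" by (simp add: m_assoc b_mult_b)
  finally show ?thesis by simp
qed

lemma b_pow_mult_a_pow: "b [^] e \<otimes> a [^] k = a [^] ((n - 1) ^ e * k) \<otimes> b [^] e"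
proof (induction e arbitrary: k)
  case 0
  then show ?case by simp
next
  case (Suc e)
  have "b [^] Suc e \<otimes> a [^] k = b [^] e \<otimes> a [^] ((n - 1) * k) \<otimes> b"
    by (simp add: m_assoc b_mult_a_pow)
  also have "\<dots> = a [^] ((n - 1) ^ Suc e * k) \<otimes> b [^] Suc e"
    by (simp add: Suc m_assoc mult_ac)
  finally show ?case .
qed

lemma a_pow_mod: "a [^] (k::nat) = a [^] (k mod n)"
proof -
  have "a [^] k = a [^] (n * (k div n) + k mod n)" by simp
  also have "\<dots> = (a [^] n) [^] (k div n) \<otimes> a [^] (k mod n)"
    by (simp only: nat_pow_mult nat_pow_pow generators_closed)
  finally have "a [^] k = (a [^] n) [^] (k div n) \<otimes> a [^] (k mod n)" .
  then show ?thesis by (simp add: a_pow_n)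
qed

lemma b_pow_mod: "b [^] (e::nat) = b [^] (e mod 2)"
proof -
  have "b [^] e = b [^] (2 * (e div 2) + e mod 2)" by simp
  also have "\<dots> = (b [^] (2::nat)) [^] (e div 2) \<otimes> b [^] (e mod 2)"
    by (simp only: nat_pow_mult nat_pow_pow generators_closed)
  finally have "b [^] e = (b [^] (2::nat)) [^] (e div 2) \<otimes> b [^] (e mod 2)" .
  then show ?thesis by (simp add: b_square)
qed

lemma inv_b: "inv b = b"
  using b_mult_b by (simp add: inv_equality)

lemma generate_subset_normal_forms:
  "generate G {a, b} \<subseteq> (\<lambda>(k, e). a [^] k \<otimes> b [^] e) ` ({..<n} \<times> {..<2::nat})"
proof
  fix x assume "x \<in> generate G {a, b}"
  then have "\<exists>(k::nat) (e::nat). x = a [^] k \<otimes> b [^] e"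
  proof (induction rule: generate.induct)
    case one
    have "\<one> = a [^] (0::nat) \<otimes> b [^] (0::nat)" by simp
    then show ?case by blast
  next
    case (incl h)
    have "a = a [^] (1::nat) \<otimes> b [^] (0::nat)" "b = a [^] (0::nat) \<otimes> b [^] (1::nat)" by simp_all
    with incl show ?case by blast
  next
    case (inv h)
    have "inv a = a [^] (n - 1) \<otimes> b [^] (0::nat)" "inv b = a [^] (0::nat) \<otimes> b [^] (1::nat)"
      by (simp_all add: inv_a inv_b)
    with inv show ?case by blast
  next
    case (eng x y)
    then obtain k e j f :: nat where "x = a [^] k \<otimes> b [^] e" "y = a [^] j \<otimes> b [^] f" by blast
    then have "x \<otimes> y = a [^] k \<otimes> (b [^] e \<otimes> a [^] j) \<otimes> b [^] f" by (simp add: m_assoc)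
    also have "\<dots> = a [^] (k + (n - 1) ^ e * j) \<otimes> b [^] (e + f)"
      by (simp add: b_pow_mult_a_pow m_assoc flip: nat_pow_mult)
    finally show ?case by blast
  qed
  then obtain k e :: nat where "x = a [^] k \<otimes> b [^] e" by blast
  then have "x = a [^] (k mod n) \<otimes> b [^] (e mod 2)" using a_pow_mod[of k] b_pow_mod[of e] by simp
  then show "x \<in> (\<lambda>(k, e). a [^] k \<otimes> b [^] e) ` ({..<n} \<times> {..<2::nat})"
    using n_pos by (auto intro!: image_eqI[of _ _ "(k mod n, e mod 2)"])
qed

lemma reflection_square: "(a [^] (k::nat) \<otimes> b) [^] (2::nat) = \<one>"
proof -
  have "(a [^] k \<otimes> b) [^] (2::nat) = a [^] k \<otimes> (b \<otimes> a [^] k \<otimes> b)"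
    by (simp add: numeral_2_eq_2 m_assoc)
  also have "\<dots> = (a [^] n) [^] k"
    using n_pos by (simp add: b_conj_a_pow nat_pow_mult nat_pow_pow algebra_simps)
  finally show ?thesis by (simp add: a_pow_n)
qed

end

locale dihedral_group = dihedral_relations +
  assumes generated: "generate G {a, b} = carrier G"
    and order_eq: "order G = 2 * n"
begin

lemma finite_carrier: "finite (carrier G)"
  using order_eq n_pos order_gt_0_iff_finite by auto

lemma normal_form_bij:
  "bij_betw (\<lambda>(k, e). a [^] k \<otimes> b [^] e) ({..<n} \<times> {..<2::nat}) (carrier G)"
proof -
  let ?f = "\<lambda>(k, e). a [^] k \<otimes> b [^] e"
  have "?f ` ({..<n} \<times> {..<2::nat}) = carrier G"
    using generate_subset_normal_forms generated by auto
  moreover have "card ({..<n} \<times> {..<2::nat}) = card (carrier G)"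
    using order_eq by (simp add: order_def)
  ultimately show ?thesis
    by (simp add: bij_betw_def eq_card_imp_inj_on)
qed

lemma rotation_eq_iff: "k < n \<Longrightarrow> j < n \<Longrightarrow> a [^] k = a [^] j \<longleftrightarrow> k = j"
  using inj_onD[OF bij_betw_imp_inj_on[OF normal_form_bij], of "(k, 0)" "(j, 0)"] by auto

lemma reflection_eq_iff: "k < n \<Longrightarrow> j < n \<Longrightarrow> a [^] k \<otimes> b = a [^] j \<otimes> b \<longleftrightarrow> k = j"
  using inj_onD[OF bij_betw_imp_inj_on[OF normal_form_bij], of "(k, 1)" "(j, 1)"] by auto

lemma rotation_neq_reflection: "k < n \<Longrightarrow> j < n \<Longrightarrow> a [^] k \<noteq> a [^] j \<otimes> b"
  using inj_onD[OF bij_betw_imp_inj_on[OF normal_form_bij], of "(k, 0)" "(j, 1)"] by auto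

lemma carrier_eq_rotations_reflections:
  "carrier G = (\<lambda>k. a [^] k) ` {..<n} \<union> (\<lambda>k. a [^] k \<otimes> b) ` {..<n}"
proof -
  have "{..<n} \<times> {..<2::nat} = (\<lambda>k. (k, 0)) ` {..<n} \<union> (\<lambda>k. (k, 1)) ` {..<n}"
    by (auto simp: less_2_cases_iff)
  then show ?thesis
    using bij_betw_imp_surj_on[OF normal_form_bij] by (simp add: image_Un image_image)
qed

lemma ord_a: "ord a = n"
proof -
  have "ord a dvd n" using a_pow_n pow_eq_id by simp
  moreover have "0 < ord a" using ord_ge_1[OF finite_carrier generators_closed(1)] by simp
  moreover have "\<not> ord a < n"
    using rotation_eq_iff[of "ord a" 0] calculation by auto
  ultimately show ?thesis using dvd_imp_le n_pos by fastforce
qed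

lemma ord_rotation: "ord (a [^] k) = n div gcd n k"
  using ord_pow_gen[of a k] ord_a n_pos by simp

lemma ord_reflection: "ord (a [^] (k::nat) \<otimes> b) = 2"
proof -
  have "a [^] k \<otimes> b \<noteq> \<one>"
    using rotation_neq_reflection[of 0 "k mod n"] n_pos a_pow_mod[of k] by auto
  then have "ord (a [^] k \<otimes> b) \<noteq> 1" using ord_eq_1[of "a [^] k \<otimes> b"] by simp
  moreover have "ord (a [^] k \<otimes> b) dvd 2" using reflection_square pow_eq_id by simp
  moreover have "ord (a [^] k \<otimes> b) \<noteq> 0" using ord_ge_1[OF finite_carrier, of "a [^] k \<otimes> b"] by simp
  ultimately show ?thesis using dvd_imp_le[of "ord (a [^] k \<otimes> b)" 2] by linarith
qed

lemma ord_dvd_or_eq_2: "y \<in> carrier G \<Longrightarrow> ord y dvd n \<or> ord y = 2"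
  using carrier_eq_rotations_reflections
  by (auto simp: ord_rotation ord_reflection) (metis dvd_div_mult_self gcd_dvd1 dvd_triv_left)

lemma card_elements_with_ord:
  "card {y \<in> carrier G. P (ord y)} = (\<Sum>d | d dvd n \<and> P d. totient d) + (if P 2 then n else 0)"
proof -
  have "{y \<in> carrier G. P (ord y)} =
      (\<lambda>k. a [^] k) ` {k\<in>{..<n}. P (n div gcd n k)} \<union> (\<lambda>k. a [^] k \<otimes> b) ` {k\<in>{..<n}. P 2}"
    using carrier_eq_rotations_reflections by (auto simp: ord_rotation ord_reflection)
  also have "card \<dots> = card {k\<in>{..<n}. P (n div gcd n k)} + card {k\<in>{..<n}. P 2}"
    using rotation_neq_reflection
    by (subst card_Un_disjoint) (auto simp: card_image inj_on_def rotation_eq_iff reflection_eq_iff)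
  finally show ?thesis using card_div_gcd_sum_totient[OF n_pos, of P] by simp
qed

end

lemma is_dihedral_imp_dihedral_group:
  assumes "is_dihedral G n" "0 < n"
  obtains a b where "dihedral_group G n a b"
  using assms unfolding is_dihedral_def dihedral_group_def dihedral_group_axioms_def
    dihedral_relations_def dihedral_relations_axioms_def by blast

lemma (in group) OD_degree_eq_card_ord:
  "OD_degree G x = card {y \<in> carrier G. ord y \<noteq> ord x \<and> (ord y dvd ord x \<or> ord x dvd ord y)}"
  unfolding OD_degree_def OD_adj_def by (intro arg_cong[where f = card]) auto

theorem mainTheorem17:
  fixes G :: "('a, 'b) monoid_scheme" and n :: nat and x :: 'a
  assumes "n \<ge> 3" and "odd n" and "is_dihedral G n" and "x \<in> carrier G"
  shows "int (OD_degree G x) =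
    (let m = group.ord G x in
      if m = 1 then 2 * int n - 1
      else if m = 2 then 1
      else int m - 2 * int (totient m) + (\<Sum>l\<in>{l. l dvd n div m}. int (totient (l * m))))"
proof -
  have "0 < n" using assms(1) by simp
  then obtain a b where "dihedral_group G n a b"
    using assms(3) is_dihedral_imp_dihedral_group by blast
  then interpret dihedral_group G n a b .
  define m where "m = ord x"
  let ?P = "\<lambda>d. d \<noteq> m \<and> (d dvd m \<or> m dvd d)"
  have "OD_degree G x = card {y \<in> carrier G. ?P (ord y)}"
    unfolding m_def by (rule OD_degree_eq_card_ord)
  also have "\<dots> = (\<Sum>d | d dvd n \<and> ?P d. totient d) + (if ?P 2 then n else 0)"
    by (rule card_elements_with_ord)
  finally have degree: "OD_degree G x = \<dots>" .
  consider "m = 2" | "m dvd n" using ord_dvd_or_eq_2[OF assms(4)] m_def by blast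
  then show ?thesis
  proof cases
    case 1
    then show ?thesis
      using degree odd_divisors_comparable_with_two[OF assms(2)] unfolding Let_def m_def[symmetric]
      by simp
  next
    case 2
    then have "odd m" using assms(2) dvd_trans by blast
    then have "?P 2 \<longleftrightarrow> m = 1" "m \<noteq> 2" using odd_dvd_two_eq_one[of m] by auto
    moreover have "int (\<Sum>d | d dvd n \<and> ?P d. totient d) =
        int m - 2 * int (totient m) + (\<Sum>l | l dvd n div m. int (totient (l * m)))"
      using sum_totient_comparable_divisors[OF \<open>0 < n\<close> 2] by (simp add: conj_commute)
    moreover have "m = 1 \<Longrightarrow> (\<Sum>l | l dvd n div m. int (totient (l * m))) = int n"
      by (simp flip: of_nat_sum add: totient_divisor_sum)
    ultimately show ?thesis using degree unfolding Let_def m_def[symmetric] by auto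
  qed
qed

end
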